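(* Let $P$ be a finite poset and $E$ an equivalence relation on $P$. Then there exist a poset $P'$ on the same ground set, obtained from $P$ by adding order relations (i.e. $x\le_Py\Rightarrow x\le_{P'}y$), and an equivalence relation $E'$ on $P$ whose classes are unions of classes of $E$, such that $E'$ is a chain congruence on $P'$ and $K_{P,E}(\mathbf x)=K_{P',E'}(\mathbf x)$.
   Context: For a finite poset $P$ and equivalence relation $E$ on $P$, $K_{P,E}(\mathbf x)=\sum_f\prod_{x\in P}x_{f(x)}$, summed over all $f:P\to\mathbb Z_{>0}$ such that $x<_Py\Rightarrow f(x)\le f(y)$ and $x\sim_E y\Rightarrow f(x)=f(y)$. An equivalence relation $E$ on $P$ is a chain congruence if (i) every class $[x]_E$ is a chain in $P$, and (ii) whenever $x<_Py$ and $x\not\sim_Ey$, we have $\max[x]_E<_P\min[y]_E$. *)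

theory Defs
  imports "HOL-Library.FuncSet"
begin

definition strict_less :: "'a rel \<Rightarrow> 'a \<Rightarrow> 'a \<Rightarrow> bool" where
  "strict_less r x y \<longleftrightarrow> (x, y) \<in> r \<and> x \<noteq> y"

(* Positive integers are represented by nats \<ge> 1;
   f is extensional (undefined outside P). *)
definition PE_maps :: "'a set \<Rightarrow> 'a rel \<Rightarrow> 'a rel \<Rightarrow> ('a \<Rightarrow> nat) set" where
  "PE_maps P r E = {f. f \<in> P \<rightarrow>\<^sub>E {1..}
      \<and> (\<forall>x\<in>P. \<forall>y\<in>P. strict_less r x y \<longrightarrow> f x \<le> f y)
      \<and> (\<forall>x\<in>P. \<forall>y\<in>P. (x, y) \<in> E \<longrightarrow> f x = f y)}"

(* The formal power series K_{P,E}(x) = \<Sum>_f \<Prod>_{x\<in>P} x_{f(x)} in the variables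
   x_1, x_2, ..., represented by its coefficient function: the coefficient of the
   monomial \<Prod>_i x_i^{\<alpha> i} (exponent vector \<alpha> :: nat \<Rightarrow> nat) is the number of
   (P,E)-partitions f with |f^{-1}(i)| = \<alpha> i for all i. *)
definition K_coeff :: "'a set \<Rightarrow> 'a rel \<Rightarrow> 'a rel \<Rightarrow> (nat \<Rightarrow> nat) \<Rightarrow> nat" where
  "K_coeff P r E \<alpha> = card {f \<in> PE_maps P r E. \<forall>i. card {x \<in> P. f x = i} = \<alpha> i}"

definition chain_congruence :: "'a set \<Rightarrow> 'a rel \<Rightarrow> 'a rel \<Rightarrow> bool" where
  "chain_congruence P r E \<longleftrightarrow>
     (\<forall>x\<in>P. \<forall>u\<in>E `` {x}. \<forall>v\<in>E `` {x}. (u, v) \<in> r \<or> (v, u) \<in> r)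
   \<and> (\<forall>x\<in>P. \<forall>y\<in>P. strict_less r x y \<and> (x, y) \<notin> E \<longrightarrow>
        (\<exists>m\<in>E `` {x}. \<exists>n\<in>E `` {y}.
            (\<forall>u\<in>E `` {x}. (u, m) \<in> r) \<and> (\<forall>v\<in>E `` {y}. (n, v) \<in> r)
          \<and> strict_less r m n))"

end

theory Submission imports Defs begin

text \<open>Let \<open>R\<close> be the preorder generated by \<open>r\<close> and \<open>E\<close>. Every \<open>(P,E)\<close>-partition is monotone
  along \<open>R\<close>, hence constant on the classes of \<open>E' = R \<inter> R\<inverse>\<close>, which are unions of \<open>E\<close>-classes.
  Breaking the ties of \<open>R\<close> inside each \<open>E'\<close>-class by a linear extension of \<open>r\<close> gives a
  partial order \<open>r' \<supseteq> r\<close> in which every \<open>E'\<close>-class is a chain, and distinct classes are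
  compared as wholes, so \<open>E'\<close> is a chain congruence of \<open>r'\<close>. The \<open>(P,E)\<close>- and \<open>(P,E')\<close>-partitions
  for \<open>r'\<close> are literally the same maps, so all coefficients of \<open>K\<close> agree.\<close>

lemma finite_partial_order_injective_monotone:
  assumes "finite P" "partial_order_on P r"
  obtains k :: "'a \<Rightarrow> nat"
  where "inj_on k P" "\<And>x y. (x, y) \<in> r \<Longrightarrow> k x \<le> k y"
proof -
  obtain g where g: "bij_betw g P {0..<card P}"
    using ex_bij_betw_finite_nat[OF assms(1)] by blast
  have rP: "r \<subseteq> P \<times> P" and refl: "refl_on P r" and tr: "trans r" and an: "antisym r"
    using partial_order_onD[OF assms(2)] by auto
  define rank where "rank x = card {z \<in> P. (z, x) \<in> r}" for x
  define k where "k x = rank x * card P + g x" for x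
  have g_less: "g x < card P" if "x \<in> P" for x
    using g that unfolding bij_betw_def by auto
  have rank_less: "rank x < rank y" if "(x, y) \<in> r" "x \<noteq> y" for x y
  proof -
    have "y \<in> {z \<in> P. (z, y) \<in> r} - {z \<in> P. (z, x) \<in> r}"
      using that rP refl an by (auto dest: refl_onD antisymD)
    moreover have "{z \<in> P. (z, x) \<in> r} \<subseteq> {z \<in> P. (z, y) \<in> r}"
      using that tr by (auto dest: transD)
    ultimately have "{z \<in> P. (z, x) \<in> r} \<subset> {z \<in> P. (z, y) \<in> r}" by blast
    then show ?thesis
      unfolding rank_def using assms(1) by (intro psubset_card_mono) auto
  qed
  have k_less: "k x < k y" if "x \<in> P" "rank x < rank y" for x y
  proof -
    have "k x < (rank x + 1) * card P" using g_less[OF that(1)] unfolding k_def by simp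
    also have "\<dots> \<le> rank y * card P" using that(2) by (intro mult_right_mono) auto
    also have "\<dots> \<le> k y" unfolding k_def by simp
    finally show ?thesis .
  qed
  show ?thesis
  proof
    show "inj_on k P"
    proof (rule inj_onI)
      fix x y assume xy: "x \<in> P" "y \<in> P" "k x = k y"
      have "rank x = rank y"
      proof (rule linorder_cases[of "rank x" "rank y"])
        show "rank x < rank y \<Longrightarrow> ?thesis" using k_less[OF xy(1), of y] xy(3) by linarith
        show "rank y < rank x \<Longrightarrow> ?thesis" using k_less[OF xy(2), of x] xy(3) by linarith
      qed
      then have "g x = g y" using xy unfolding k_def by simp
      then show "x = y" using g xy unfolding bij_betw_def inj_on_def by blast
    qed
    show "k x \<le> k y" if "(x, y) \<in> r" for x y
    proof (cases "x = y")
      case False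
      have "x \<in> P" using that rP by blast
      then show ?thesis using k_less rank_less[OF that False] by (simp add: less_imp_le)
    qed simp
  qed
qed

lemma preorder_on_trancl:
  assumes "S \<subseteq> P \<times> P" "refl_on P S"
  shows "preorder_on P (S\<^sup>+)"
  using assms trancl_subset_Sigma[OF assms(1)] unfolding preorder_on_def refl_on_def by auto

lemma equiv_Int_converse:
  assumes "preorder_on P R"
  shows "equiv P (R \<inter> R\<inverse>)"
proof (rule equivI)
  have RP: "R \<subseteq> P \<times> P" and refl: "refl_on P R" and tr: "trans R"
    using assms unfolding preorder_on_def by auto
  show "R \<inter> R\<inverse> \<subseteq> P \<times> P" using RP by blast
  show "refl_on P (R \<inter> R\<inverse>)" using refl unfolding refl_on_def by blast
  show "sym (R \<inter> R\<inverse>)" by (rule symI) blast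
  show "trans (R \<inter> R\<inverse>)" by (rule transI) (blast intro: transD[OF tr])
qed

definition break_ties :: "'a rel \<Rightarrow> ('a \<Rightarrow> nat) \<Rightarrow> 'a rel" where
  "break_ties R k = {(x, y). (x, y) \<in> R \<and> ((y, x) \<notin> R \<or> k x \<le> k y)}"

lemma partial_order_on_break_ties:
  assumes "preorder_on P R" "inj_on k P"
  shows "partial_order_on P (break_ties R k)"
proof -
  have RP: "R \<subseteq> P \<times> P" and refl: "refl_on P R" and tr: "trans R"
    using assms(1) unfolding preorder_on_def by auto
  have "trans (break_ties R k)"
  proof (rule transI)
    fix x y z assume "(x, y) \<in> break_ties R k" "(y, z) \<in> break_ties R k"
    then have xy: "(x, y) \<in> R" "(y, x) \<notin> R \<or> k x \<le> k y"
      and yz: "(y, z) \<in> R" "(z, y) \<notin> R \<or> k y \<le> k z"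
      unfolding break_ties_def by auto
    have "(x, z) \<in> R" using xy(1) yz(1) by (rule transD[OF tr])
    moreover have "k x \<le> k z" if "(z, x) \<in> R"
    proof -
      have "(y, x) \<in> R" using yz(1) that by (rule transD[OF tr])
      moreover have "(z, y) \<in> R" using that xy(1) by (rule transD[OF tr])
      ultimately show ?thesis using xy(2) yz(2) by simp
    qed
    ultimately show "(x, z) \<in> break_ties R k" unfolding break_ties_def by auto
  qed
  moreover have "antisym (break_ties R k)"
  proof (rule antisymI)
    fix x y assume "(x, y) \<in> break_ties R k" "(y, x) \<in> break_ties R k"
    then have "k x = k y" "x \<in> P" "y \<in> P" using RP unfolding break_ties_def by auto
    then show "x = y" by (intro inj_onD[OF assms(2)])
  qed
  ultimately show ?thesis
    using RP refl unfolding partial_order_on_def preorder_on_def refl_on_def break_ties_def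
    by auto
qed

lemma break_ties_greatest_least:
  assumes "finite C" "C \<noteq> {}" "C \<times> C \<subseteq> R"
  obtains m n where "m \<in> C" "n \<in> C"
    "\<And>u. u \<in> C \<Longrightarrow> (u, m) \<in> break_ties R k"
    "\<And>u. u \<in> C \<Longrightarrow> (n, u) \<in> break_ties R k"
proof -
  have fin: "finite (k ` C)" and ne: "k ` C \<noteq> {}" using assms(1,2) by auto
  obtain m where m: "m \<in> C" "k m = Max (k ` C)" using Max_in[OF fin ne] by (metis imageE)
  obtain n where n: "n \<in> C" "k n = Min (k ` C)" using Min_in[OF fin ne] by (metis imageE)
  show ?thesis
  proof
    show "(u, m) \<in> break_ties R k" if "u \<in> C" for u
      using that m assms(3) fin unfolding break_ties_def by auto
    show "(n, u) \<in> break_ties R k" if "u \<in> C" for u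
      using that n assms(3) fin unfolding break_ties_def by auto
  qed (use m n in auto)
qed

lemma chain_congruence_break_ties:
  assumes "finite P" "preorder_on P R"
  shows "chain_congruence P (break_ties R k) (R \<inter> R\<inverse>)"
proof -
  have RP: "R \<subseteq> P \<times> P" and refl: "refl_on P R" and tr: "trans R"
    using assms(2) unfolding preorder_on_def by auto
  define cls where "cls x = (R \<inter> R\<inverse>) `` {x}" for x
  have cls_R: "cls x \<times> cls x \<subseteq> R" for x
    unfolding cls_def by (blast intro: transD[OF tr])
  have cls_nonempty: "cls x \<noteq> {}" if "x \<in> P" for x
    unfolding cls_def using refl_onD[OF refl that] by blast
  have cls_finite: "finite (cls x)" for x
    using RP assms(1) unfolding cls_def by (blast intro: finite_subset)
  have chains: "(u, v) \<in> break_ties R k \<or> (v, u) \<in> break_ties R k"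
    if "u \<in> cls x" "v \<in> cls x" for x u v
    using that cls_R unfolding break_ties_def by auto
  have separated: "\<exists>m\<in>cls x. \<exists>n\<in>cls y. (\<forall>u\<in>cls x. (u, m) \<in> break_ties R k)
      \<and> (\<forall>v\<in>cls y. (n, v) \<in> break_ties R k) \<and> strict_less (break_ties R k) m n"
    if xy: "x \<in> P" "y \<in> P" "(x, y) \<in> R" "(y, x) \<notin> R" for x y
  proof -
    obtain m where m: "m \<in> cls x" "\<And>u. u \<in> cls x \<Longrightarrow> (u, m) \<in> break_ties R k"
      using break_ties_greatest_least[OF cls_finite cls_nonempty[OF xy(1)] cls_R] by metis
    obtain n where n: "n \<in> cls y" "\<And>v. v \<in> cls y \<Longrightarrow> (n, v) \<in> break_ties R k"
      using break_ties_greatest_least[OF cls_finite cls_nonempty[OF xy(2)] cls_R] by metis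
    have "(m, n) \<in> R" "(n, m) \<notin> R"
      using m(1) n(1) xy(3,4) unfolding cls_def by (blast intro: transD[OF tr])+
    then have "strict_less (break_ties R k) m n"
      unfolding strict_less_def break_ties_def by auto
    then show ?thesis using m n by blast
  qed
  show ?thesis
    unfolding chain_congruence_def cls_def[symmetric]
  proof (intro conjI ballI impI)
    fix x u v assume "u \<in> cls x" "v \<in> cls x"
    then show "(u, v) \<in> break_ties R k \<or> (v, u) \<in> break_ties R k" by (rule chains)
  next
    fix x y assume "x \<in> P" "y \<in> P" and
      xy: "strict_less (break_ties R k) x y \<and> (x, y) \<notin> R \<inter> R\<inverse>"
    moreover from xy have "(x, y) \<in> R" "(y, x) \<notin> R"
      unfolding strict_less_def break_ties_def by auto
    ultimately show "\<exists>m\<in>cls x. \<exists>n\<in>cls y. (\<forall>u\<in>cls x. (u, m) \<in> break_ties R k)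
      \<and> (\<forall>v\<in>cls y. (n, v) \<in> break_ties R k) \<and> strict_less (break_ties R k) m n"
      by (intro separated)
  qed
qed

lemma PE_maps_mono_trancl:
  assumes "f \<in> PE_maps P r E" "r \<union> E \<subseteq> P \<times> P" "(x, y) \<in> (r \<union> E)\<^sup>+"
  shows "f x \<le> f y"
proof -
  have edge: "f u \<le> f v" if "(u, v) \<in> r \<union> E" for u v
    using that assms(1,2) unfolding PE_maps_def strict_less_def by (cases "u = v") auto
  show ?thesis
    using assms(3)
  proof (induction rule: trancl_induct)
    case (base y)
    then show ?case by (rule edge)
  next
    case (step y z)
    show ?case using step.IH edge[OF step.hyps(2)] by (rule order_trans)
  qed
qed

lemma PE_maps_eq_within_trancl:
  assumes "r \<union> E \<subseteq> P \<times> P" "r \<subseteq> r'" "E \<subseteq> E'" "sym E'" "r' \<union> E' \<subseteq> (r \<union> E)\<^sup>+"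
  shows "PE_maps P r E = PE_maps P r' E'"
proof
  show "PE_maps P r' E' \<subseteq> PE_maps P r E"
    using assms(2,3) unfolding PE_maps_def strict_less_def by blast
  show "PE_maps P r E \<subseteq> PE_maps P r' E'"
  proof
    fix f assume f: "f \<in> PE_maps P r E"
    have mono: "f x \<le> f y" if "(x, y) \<in> r' \<union> E'" for x y
      using that assms(5) by (blast intro: PE_maps_mono_trancl[OF f assms(1)])
    have "f x = f y" if "(x, y) \<in> E'" for x y
      using mono[of x y] mono[of y x] that symD[OF assms(4) that] by simp
    moreover have "f x \<le> f y" if "strict_less r' x y" for x y
      using that mono unfolding strict_less_def by blast
    ultimately show "f \<in> PE_maps P r' E'"
      using f unfolding PE_maps_def by blast
  qed
qed

theorem lemma6p1:
  fixes P :: "'a set" and r E :: "'a rel"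
  assumes "finite P" and "partial_order_on P r" and "equiv P E"
  shows "\<exists>r' E'. partial_order_on P r' \<and> r \<subseteq> r' \<and> equiv P E' \<and> E \<subseteq> E'
           \<and> chain_congruence P r' E' \<and> K_coeff P r E = K_coeff P r' E'"
proof -
  obtain k :: "'a \<Rightarrow> nat" where k_inj: "inj_on k P" and k_mono: "\<And>x y. (x, y) \<in> r \<Longrightarrow> k x \<le> k y"
    using finite_partial_order_injective_monotone[OF assms(1,2)] by blast
  have "r \<subseteq> P \<times> P" "refl_on P r" "E \<subseteq> P \<times> P" "sym E"
    using partial_order_onD[OF assms(2)] assms(3) by (auto elim: equivE)
  then have rE: "r \<union> E \<subseteq> P \<times> P" "refl_on P (r \<union> E)" and E_sym: "E\<inverse> = E"
    unfolding refl_on_def sym_conv_converse_eq by blast+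
  define R where "R = (r \<union> E)\<^sup>+"
  have R: "preorder_on P R"
    unfolding R_def using preorder_on_trancl[OF rE] .
  have "r \<union> E \<subseteq> R"
    unfolding R_def by (rule subsetI) (rule r_into_trancl')
  then have "r \<subseteq> R" "E \<subseteq> R" "E \<subseteq> R\<inverse>"
    using converse_mono[of E R] E_sym by auto
  then have r_le: "r \<subseteq> break_ties R k" and E_le: "E \<subseteq> R \<inter> R\<inverse>"
    using k_mono unfolding break_ties_def by auto
  have "PE_maps P r E = PE_maps P (break_ties R k) (R \<inter> R\<inverse>)"
  proof (rule PE_maps_eq_within_trancl[OF rE(1) r_le E_le])
    show "sym (R \<inter> R\<inverse>)" by (rule symI) blast
    show "break_ties R k \<union> R \<inter> R\<inverse> \<subseteq> (r \<union> E)\<^sup>+"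
      unfolding R_def break_ties_def by blast
  qed
  then have "K_coeff P r E = K_coeff P (break_ties R k) (R \<inter> R\<inverse>)"
    unfolding K_coeff_def by (rule arg_cong)
  then show ?thesis
    using partial_order_on_break_ties[OF R k_inj] r_le equiv_Int_converse[OF R] E_le
      chain_congruence_break_ties[OF assms(1) R]
    by (intro exI[of _ "break_ties R k"] exI[of _ "R \<inter> R\<inverse>"] conjI)
qed

end
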